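(* No finite Blaschke product of degree $\ge2$ is outer regular; that is, if $\phi(z)=\omega\prod_{j=1}^d\frac{a_j-z}{1-\overline{a_j}z}$ with $|\omega|=1$, $a_j\in\mathbb{U}$ and $d\ge2$, then $\phi$ has a critical value in $\{z\in\hat{\mathbb{C}}:|z|\ge1\}\cup\{\infty\}$.
   Context: $\mathbb{U}$ is the open unit disc, $\hat{\mathbb{C}}$ the Riemann sphere. Rational functions are regarded as maps $\hat{\mathbb{C}}\to\hat{\mathbb{C}}$; the degree of $p/q$ (relatively prime polynomials) is $\max(\deg p,\deg q)$. A point $w$ is a regular value of a rational function $R$ of degree $d$ if $R^{-1}(\{w\})$ consists of $d$ distinct points, and a critical value otherwise. A rational self-map $\phi$ of $\mathbb{U}$ is outer regular if all its critical values lie in $\mathbb{U}$, i.e. every point of $\{|z|\ge1\}\cup\{\infty\}$ is a regular value of $\phi$. *)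

theory Defs
  imports "HOL-Computational_Algebra.Computational_Algebra" "HOL-Computational_Algebra.Field_as_Ring"
begin

text \<open>The Riemann sphere is modelled as complex option: None is the point at infinity.\<close>

definition red_num :: "complex poly \<Rightarrow> complex poly \<Rightarrow> complex poly" where
  "red_num p q = p div gcd p q"

definition red_den :: "complex poly \<Rightarrow> complex poly \<Rightarrow> complex poly" where
  "red_den p q = q div gcd p q"

definition rat_degree :: "complex poly \<Rightarrow> complex poly \<Rightarrow> nat" where
  "rat_degree p q = max (degree (red_num p q)) (degree (red_den p q))"

definition rat_map :: "complex poly \<Rightarrow> complex poly \<Rightarrow> complex option \<Rightarrow> complex option" where
  "rat_map p q z =
     (let P = red_num p q; Q = red_den p q in
      case z of
        Some c \<Rightarrow> (if poly Q c = 0 then None else Some (poly P c / poly Q c))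
      | None \<Rightarrow> (if degree P > degree Q then None
                else if degree P < degree Q then Some 0
                else Some (lead_coeff P / lead_coeff Q)))"

definition regular_value :: "complex poly \<Rightarrow> complex poly \<Rightarrow> complex option \<Rightarrow> bool" where
  "regular_value p q w \<longleftrightarrow>
     finite (rat_map p q -` {w}) \<and> card (rat_map p q -` {w}) = rat_degree p q"

definition critical_value :: "complex poly \<Rightarrow> complex poly \<Rightarrow> complex option \<Rightarrow> bool" where
  "critical_value p q w \<longleftrightarrow> \<not> regular_value p q w"

definition blaschke_num :: "complex \<Rightarrow> (nat \<Rightarrow> complex) \<Rightarrow> nat \<Rightarrow> complex poly" where
  "blaschke_num \<omega> a d = smult \<omega> (\<Prod>j\<in>{1..d}. [:a j, -1:])"

definition blaschke_den :: "(nat \<Rightarrow> complex) \<Rightarrow> nat \<Rightarrow> complex poly" where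
  "blaschke_den a d = (\<Prod>j\<in>{1..d}. [:1, - cnj (a j):])"

end

theory Submission
  imports Defs
begin

text \<open>
  Write \<phi> = P/Q. Since d \<ge> 2, the Wronskian P'Q - PQ' is a nonconstant polynomial, so it has a
  root z0, which is a double root of the fibre polynomial of \<phi>(z0); hence \<phi>(z0) has fewer
  than d preimages. A Blaschke product satisfies \<phi>(1/conj z) = 1/conj \<phi>(z), which reflects
  fibres onto fibres. If |z0| \<ge> 1 we are done, since |\<phi>| \<ge> 1 outside the disc. If 0 < |z0| < 1,
  the reflected point 1/conj z0 lies outside the disc and is again a double root of a fibre.
  If z0 = 0, the reflected fibre polynomial has degree at most d - 2, so \<infinity> is a double point
  and \<phi>(\<infinity>), which has modulus \<ge> 1, is a critical value.
\<close>

lemma linear_power2_dvd_if_pderiv_root: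
  fixes F :: "'a::idom poly"
  assumes "poly F z = 0" "poly (pderiv F) z = 0"
  shows "[:-z, 1:] ^ 2 dvd F"
proof -
  obtain S where S: "F = [:-z, 1:] * S"
    using assms(1) poly_eq_0_iff_dvd by (metis dvdE)
  have "pderiv F = [:-z, 1:] * pderiv S + S * pderiv [:-z, 1:]"
    unfolding S by (rule pderiv_mult)
  then have "poly S z = 0" using assms(2) by (simp add: pderiv_pCons)
  then obtain T where "S = [:-z, 1:] * T"
    using poly_eq_0_iff_dvd by (metis dvdE)
  then have "F = [:-z, 1:] ^ 2 * T" using S by (metis power2_eq_square mult.assoc)
  then show ?thesis by simp
qed

lemma poly_eqI_nonzero:
  fixes p q :: "'a::field_char_0 poly"
  assumes "\<And>z. z \<noteq> 0 \<Longrightarrow> poly p z = poly q z"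
  shows "p = q"
proof (rule ccontr)
  assume "p \<noteq> q"
  then have "finite {z. poly (p - q) z = 0}" by (intro poly_roots_finite) simp
  moreover have "UNIV - {0} \<subseteq> {z. poly (p - q) z = 0}" using assms by auto
  ultimately have "finite (UNIV - {0::'a})" by (rule finite_subset[rotated])
  then show False by (simp add: infinite_UNIV_char_0)
qed

definition wronskian :: "'a::idom poly \<Rightarrow> 'a poly \<Rightarrow> 'a poly" where
  "wronskian p q = pderiv p * q - p * pderiv q"

lemma wronskian_diff_smult: "wronskian (p - smult c q) q = wronskian p q"
  by (simp add: wronskian_def pderiv_diff pderiv_smult algebra_simps)

lemma coeff_pderiv_mult_top:
  fixes p q :: "'a::{idom,ring_char_0} poly"
  assumes "degree p + degree q \<ge> 1"
  shows "coeff (pderiv p * q) (degree p + degree q - 1) = of_nat (degree p) * lead_coeff p * lead_coeff q"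
proof (cases "degree p = 0")
  case True
  then obtain c where "p = [:c:]" by (metis degree_eq_zeroE)
  then show ?thesis using True by (simp add: pderiv_pCons)
next
  case False
  have "coeff (pderiv p * q) (degree (pderiv p) + degree q) = lead_coeff (pderiv p) * lead_coeff q"
    by (rule coeff_mult_degree_sum)
  moreover have "degree (pderiv p) = degree p - 1" by (rule degree_pderiv)
  ultimately show ?thesis using False by (simp add: coeff_pderiv)
qed

lemma degree_wronskian_ge:
  fixes p q :: "'a::{idom,ring_char_0} poly"
  assumes "degree p \<noteq> degree q" "p \<noteq> 0" "q \<noteq> 0"
  shows "degree p + degree q - 1 \<le> degree (wronskian p q)"
proof (rule le_degree)
  have deg: "degree p + degree q \<ge> 1" using assms(1) by linarith
  have "coeff (p * pderiv q) (degree p + degree q - 1) = of_nat (degree q) * lead_coeff p * lead_coeff q"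
    using coeff_pderiv_mult_top[of q p] deg by (simp add: ac_simps)
  then have "coeff (wronskian p q) (degree p + degree q - 1)
      = (of_nat (degree p) - of_nat (degree q)) * lead_coeff p * lead_coeff q"
    using coeff_pderiv_mult_top[OF deg] by (simp add: wronskian_def algebra_simps)
  then show "coeff (wronskian p q) (degree p + degree q - 1) \<noteq> 0"
    using assms by simp
qed

text \<open>
  For degree p \<le> n this is z ^ n * conj (p (1 / conj z)), the reflection of p in the unit circle
  viewed as a polynomial of formal degree n.
\<close>
definition conj_reflect :: "nat \<Rightarrow> complex poly \<Rightarrow> complex poly" where
  "conj_reflect n p = monom 1 (n - degree p) * reflect_poly (map_poly cnj p)"

lemma poly_conj_reflect:
  assumes "degree p \<le> n" "z \<noteq> 0"
  shows "poly (conj_reflect n p) z = z ^ n * cnj (poly p (inverse (cnj z)))"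
proof -
  have "degree (map_poly cnj p) = degree p" by (simp add: degree_map_poly)
  then have "poly (conj_reflect n p) z = z ^ (n - degree p) * z ^ degree p * cnj (poly p (inverse (cnj z)))"
    using assms(2) by (simp add: conj_reflect_def poly_monom poly_reflect_poly_nz complex_cnj_inverse)
  also have "z ^ (n - degree p) * z ^ degree p = z ^ n"
    using assms(1) by (simp add: power_add[symmetric])
  finally show ?thesis .
qed

lemma degree_conj_reflect_le:
  assumes "degree p \<le> n"
  shows "degree (conj_reflect n p) \<le> n"
proof -
  have "degree (conj_reflect n p) \<le> (n - degree p) + degree (reflect_poly (map_poly cnj p))"
    unfolding conj_reflect_def by (rule order.trans[OF degree_mult_le]) (simp add: degree_monom_le)
  also have "\<dots> \<le> (n - degree p) + degree p"
    using degree_reflect_poly_le map_poly_degree_leq by (metis add_left_mono order.trans)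
  finally show ?thesis using assms by simp
qed

lemma conj_reflect_diff_smult:
  assumes "degree p \<le> n" "degree q \<le> n"
  shows "conj_reflect n (p - smult c q) = conj_reflect n p - smult (cnj c) (conj_reflect n q)"
proof (rule poly_eqI_nonzero)
  have "degree (p - smult c q) \<le> n"
    using assms degree_diff_le degree_smult_le order.trans by blast
  then show "poly (conj_reflect n (p - smult c q)) z = poly (conj_reflect n p - smult (cnj c) (conj_reflect n q)) z"
    if "z \<noteq> 0" for z
    using assms that by (simp add: poly_conj_reflect algebra_simps)
qed

lemma conj_reflect_mult:
  assumes "degree p \<le> m" "degree q \<le> n"
  shows "conj_reflect (m + n) (p * q) = conj_reflect m p * conj_reflect n q"
proof (rule poly_eqI_nonzero)
  have "degree (p * q) \<le> m + n"
    using assms degree_mult_le add_mono order.trans by blast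
  then show "poly (conj_reflect (m + n) (p * q)) z = poly (conj_reflect m p * conj_reflect n q) z"
    if "z \<noteq> 0" for z
    using assms that by (simp add: poly_conj_reflect power_add mult_ac)
qed

lemma conj_reflect_linear_power2: "conj_reflect 2 ([:-z, 1:] ^ 2) = [:1, - cnj z:] ^ 2"
proof (rule poly_eqI_nonzero)
  fix x :: complex
  assume "x \<noteq> 0"
  have "degree ([:-z, 1:] ^ 2) \<le> 2" by (simp add: degree_power_eq)
  then show "poly (conj_reflect 2 ([:-z, 1:] ^ 2)) x = poly ([:1, - cnj z:] ^ 2) x"
    using \<open>x \<noteq> 0\<close> by (simp add: poly_conj_reflect power2_eq_square field_simps)
qed

lemma reflected_linear_power2_dvd:
  fixes z :: complex
  assumes "z \<noteq> 0"
  shows "[:-inverse (cnj z), 1:] ^ 2 dvd [:1, - cnj z:] ^ 2 * T"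
proof -
  have linear: "[:1, - cnj z:] = smult (- cnj z) [:-inverse (cnj z), 1:]" using assms by simp
  have "[:1, - cnj z:] ^ 2 * T = [:-inverse (cnj z), 1:] ^ 2 * smult ((- cnj z) ^ 2) T"
    unfolding linear smult_power by (simp only: mult_smult_left mult_smult_right)
  then show ?thesis by (rule dvdI)
qed

lemma gcd_eq_1_if_no_common_root:
  fixes p q :: "complex poly"
  assumes "p \<noteq> 0" "\<And>z. poly p z = 0 \<Longrightarrow> poly q z \<noteq> 0"
  shows "gcd p q = 1"
proof -
  have "degree (gcd p q) = 0"
  proof (rule ccontr)
    assume "degree (gcd p q) \<noteq> 0"
    then obtain z where z: "poly (gcd p q) z = 0" using alg_closed_imp_poly_has_root by blast
    have "poly p z = 0" "poly q z = 0"
      using z by (metis dvd_def gcd_dvd1 gcd_dvd2 mult_eq_0_iff poly_mult)+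
    then show False using assms(2) by blast
  qed
  moreover have "gcd p q \<noteq> 0" using assms(1) by simp
  ultimately have "is_unit (gcd p q)" using is_unit_iff_degree by blast
  then show ?thesis by simp
qed

locale rat_fun =
  fixes P Q :: "complex poly" and d :: nat
  assumes degree_P: "degree P = d" and degree_Q_le: "degree Q \<le> d" and d_pos: "d \<ge> 1"
    and no_common_root: "\<And>z. poly P z = 0 \<Longrightarrow> poly Q z \<noteq> 0"
begin

lemma P_nonzero: "P \<noteq> 0"
  using degree_P d_pos by auto

lemma P_has_root: "\<exists>z. poly P z = 0"
  using degree_P d_pos by (intro alg_closed_imp_poly_has_root) simp

lemma Q_nonzero: "Q \<noteq> 0"
  using P_has_root no_common_root by fastforce

lemma red_num_eq: "red_num P Q = P" and red_den_eq: "red_den P Q = Q"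
  using gcd_eq_1_if_no_common_root[OF P_nonzero no_common_root]
  by (simp_all add: red_num_def red_den_def)

lemma rat_degree_eq: "rat_degree P Q = d"
  using degree_P degree_Q_le by (simp add: rat_degree_def red_num_eq red_den_eq)

text \<open>The finite part of the fibre over w is the zero set of fiber_poly w; the fibre contains \<infinity>
  iff the degree of fiber_poly w drops below d.\<close>
definition fiber_poly :: "complex option \<Rightarrow> complex poly" where
  "fiber_poly w = (case w of None \<Rightarrow> Q | Some c \<Rightarrow> P - smult c Q)"

lemma fiber_poly_nonzero: "fiber_poly w \<noteq> 0"
proof (cases w)
  case None
  then show ?thesis using Q_nonzero by (simp add: fiber_poly_def)
next
  case (Some c)
  obtain z where z: "poly P z = 0" using P_has_root by blast
  then have "poly Q z \<noteq> 0" by (rule no_common_root)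
  then have "P \<noteq> smult c Q \<or> c = 0" using z by auto
  then show ?thesis using Some P_nonzero by (auto simp: fiber_poly_def)
qed

lemma degree_fiber_poly_le: "degree (fiber_poly w) \<le> d"
proof (cases w)
  case None
  then show ?thesis using degree_Q_le by (simp add: fiber_poly_def)
next
  case (Some c)
  have "degree (P - smult c Q) \<le> max (degree P) (degree (smult c Q))" by (rule degree_diff_le_max)
  then show ?thesis using Some degree_P degree_Q_le degree_smult_le[of c Q] by (simp add: fiber_poly_def)
qed

lemma rat_map_Some:
  "rat_map P Q (Some z) = (if poly Q z = 0 then None else Some (poly P z / poly Q z))"
  by (simp add: rat_map_def red_num_eq red_den_eq)

lemma rat_map_None:
  "rat_map P Q None = (if degree Q = d then Some (lead_coeff P / lead_coeff Q) else None)"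
  using degree_P degree_Q_le by (simp add: rat_map_def red_num_eq red_den_eq)

lemma rat_map_Some_eq_iff: "rat_map P Q (Some z) = w \<longleftrightarrow> poly (fiber_poly w) z = 0"
proof (cases w)
  case None
  then show ?thesis by (simp add: rat_map_Some fiber_poly_def)
next
  case (Some c)
  have "poly Q z \<noteq> 0" if "poly P z = c * poly Q z"
    using that no_common_root by force
  then show ?thesis using Some
    by (auto simp: rat_map_Some fiber_poly_def field_simps)
qed

lemma rat_map_None_eq_iff: "rat_map P Q None = w \<longleftrightarrow> degree (fiber_poly w) < d"
proof (cases w)
  case None
  then show ?thesis using degree_Q_le rat_map_None by (simp add: fiber_poly_def)
next
  case (Some c)
  define F where "F = P - smult c Q"
  have F: "F \<noteq> 0" "degree F \<le> d"
    using fiber_poly_nonzero[of w] degree_fiber_poly_le[of w] Some by (simp_all add: fiber_poly_def F_def)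
  have "degree F < d \<longleftrightarrow> coeff F d = 0"
  proof
    assume "coeff F d = 0"
    then have "degree F \<noteq> d" using F(1) by auto
    then show "degree F < d" using F(2) by simp
  qed (rule coeff_eq_0)
  also have "\<dots> \<longleftrightarrow> lead_coeff P = c * coeff Q d" using degree_P by (simp add: F_def)
  also have "\<dots> \<longleftrightarrow> degree Q = d \<and> c = lead_coeff P / lead_coeff Q"
  proof
    assume lead: "lead_coeff P = c * coeff Q d"
    then have coeff_Q: "coeff Q d \<noteq> 0" using P_nonzero by auto
    then have "degree Q = d" using degree_Q_le le_degree by (metis antisym)
    then show "degree Q = d \<and> c = lead_coeff P / lead_coeff Q" using lead coeff_Q by simp
  next
    assume asm: "degree Q = d \<and> c = lead_coeff P / lead_coeff Q"
    then have "coeff Q d \<noteq> 0" using Q_nonzero by auto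
    then show "lead_coeff P = c * coeff Q d" using asm by simp
  qed
  finally show ?thesis
    using Some rat_map_None by (auto simp: fiber_poly_def F_def)
qed

lemma rat_map_vimage:
  "rat_map P Q -` {w} =
     Some ` {z. poly (fiber_poly w) z = 0} \<union> (if degree (fiber_poly w) < d then {None} else {})"
proof (rule set_eqI)
  fix x
  show "x \<in> rat_map P Q -` {w} \<longleftrightarrow>
      x \<in> Some ` {z. poly (fiber_poly w) z = 0} \<union> (if degree (fiber_poly w) < d then {None} else {})"
  proof (cases x)
    case None
    then show ?thesis using rat_map_None_eq_iff[of w] by auto
  next
    case (Some z)
    then show ?thesis using rat_map_Some_eq_iff[of z w] by auto
  qed
qed

lemma card_rat_map_vimage_le:
  "card (rat_map P Q -` {w}) \<le> card {z. poly (fiber_poly w) z = 0} + (if degree (fiber_poly w) < d then 1 else 0)"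
proof -
  have "card (rat_map P Q -` {w}) \<le> card (Some ` {z. poly (fiber_poly w) z = 0})
      + card (if degree (fiber_poly w) < d then {None :: complex option} else {})"
    unfolding rat_map_vimage by (rule card_Un_le)
  then show ?thesis by (cases "degree (fiber_poly w) < d") (simp_all add: card_image)
qed

lemma critical_value_if_card_less:
  assumes "card (rat_map P Q -` {w}) < d"
  shows "critical_value P Q w"
  using assms by (simp add: critical_value_def regular_value_def rat_degree_eq)

lemma critical_value_if_double_root:
  assumes "[:-z, 1:] ^ 2 dvd fiber_poly w"
  shows "critical_value P Q w"
proof (rule critical_value_if_card_less)
  obtain T where T: "fiber_poly w = [:-z, 1:] ^ 2 * T" using assms by (metis dvdE)
  have T_nonzero: "T \<noteq> 0" using T fiber_poly_nonzero by auto
  have degree_T: "degree (fiber_poly w) = 2 + degree T"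
    using T T_nonzero by (simp add: degree_mult_eq degree_power_eq)
  have "card {z. poly (fiber_poly w) z = 0} \<le> card (insert z {z. poly T z = 0})"
    using T T_nonzero poly_roots_finite by (intro card_mono) auto
  also have "\<dots> \<le> Suc (card {z. poly T z = 0})"
    using poly_roots_finite[OF T_nonzero] by (simp add: card_insert_if)
  also have "\<dots> \<le> Suc (degree T)" using card_poly_roots_bound[OF T_nonzero] by simp
  finally show "card (rat_map P Q -` {w}) < d"
    using card_rat_map_vimage_le[of w] degree_T degree_fiber_poly_le[of w] by (auto split: if_splits)
qed

lemma critical_value_if_degree_fiber_poly_le:
  assumes "degree (fiber_poly w) + 2 \<le> d"
  shows "critical_value P Q w"
  using assms card_rat_map_vimage_le[of w] card_poly_roots_bound[OF fiber_poly_nonzero[of w]]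
  by (intro critical_value_if_card_less) (auto split: if_splits)

lemma double_root_at_wronskian_root:
  assumes "poly (wronskian P Q) z = 0"
  shows "[:-z, 1:] ^ 2 dvd fiber_poly (rat_map P Q (Some z))"
proof (cases "poly Q z = 0")
  case True
  then have "poly (pderiv Q) z = 0"
    using assms no_common_root by (force simp: wronskian_def)
  then show ?thesis
    using True linear_power2_dvd_if_pderiv_root by (simp add: rat_map_Some fiber_poly_def)
next
  case False
  define F where "F = P - smult (poly P z / poly Q z) Q"
  have F_root: "poly F z = 0" using False by (simp add: F_def)
  have "poly (wronskian F Q) z = 0"
    using assms by (simp add: F_def wronskian_diff_smult)
  then have "poly (pderiv F) z = 0"
    using F_root False by (simp add: wronskian_def)
  with F_root have "[:-z, 1:] ^ 2 dvd F" by (rule linear_power2_dvd_if_pderiv_root)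
  then show ?thesis
    using False by (simp add: rat_map_Some fiber_poly_def F_def)
qed

lemma degree_wronskian_pos:
  assumes "d \<ge> 2"
  shows "degree (wronskian P Q) > 0"
proof (cases "degree Q = d")
  case True
  define F where "F = P - smult (lead_coeff P / lead_coeff Q) Q"
  have "degree F < d"
    using rat_map_None_eq_iff[of "Some (lead_coeff P / lead_coeff Q)"] rat_map_None True
    by (simp add: fiber_poly_def F_def)
  moreover have "F \<noteq> 0"
    using fiber_poly_nonzero[of "Some (lead_coeff P / lead_coeff Q)"] by (simp add: fiber_poly_def F_def)
  ultimately have "degree F + degree Q - 1 \<le> degree (wronskian F Q)"
    using True Q_nonzero by (intro degree_wronskian_ge) auto
  then show ?thesis using True assms by (simp add: F_def wronskian_diff_smult)
next
  case False
  then have "degree P + degree Q - 1 \<le> degree (wronskian P Q)"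
    using degree_P P_nonzero Q_nonzero by (intro degree_wronskian_ge) auto
  then show ?thesis using degree_P assms by linarith
qed

end

lemma norm_one_minus_cnj_mult_le:
  fixes a z :: complex
  assumes "norm a < 1" "norm z \<ge> 1"
  shows "norm (1 - cnj a * z) \<le> norm (a - z)"
proof -
  have identity: "(norm (a - z))\<^sup>2 - (norm (1 - cnj a * z))\<^sup>2 = (1 - (norm a)\<^sup>2) * ((norm z)\<^sup>2 - 1)"
    by (simp only: cmod_power2) (simp add: power2_eq_square algebra_simps)
  have "(norm a)\<^sup>2 \<le> 1" using assms(1) by (simp add: power_le_one)
  moreover have "1 \<le> (norm z)\<^sup>2" using assms(2) by (simp add: one_le_power)
  ultimately have "0 \<le> (1 - (norm a)\<^sup>2) * ((norm z)\<^sup>2 - 1)" by simp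
  then have "(norm (1 - cnj a * z))\<^sup>2 \<le> (norm (a - z))\<^sup>2" using identity by linarith
  then show ?thesis using power2_le_imp_le norm_ge_zero by blast
qed

definition outside_unit_disc :: "complex option \<Rightarrow> bool" where
  "outside_unit_disc w \<longleftrightarrow> w = None \<or> (\<exists>c. w = Some c \<and> norm c \<ge> 1)"

locale blaschke =
  fixes \<omega> :: complex and a :: "nat \<Rightarrow> complex" and d :: nat
  assumes norm_\<omega>: "norm \<omega> = 1" and norm_a: "\<forall>j\<in>{1..d}. norm (a j) < 1" and d_ge_2: "d \<ge> 2"
begin

abbreviation "P \<equiv> blaschke_num \<omega> a d"
abbreviation "Q \<equiv> blaschke_den a d"

lemma cnj_\<omega>_mult_\<omega>: "cnj \<omega> * \<omega> = 1"
  using norm_\<omega> by (metis complex_norm_square mult.commute of_real_1 power_one)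

lemma poly_P: "poly P z = \<omega> * (\<Prod>j\<in>{1..d}. a j - z)"
  by (simp add: blaschke_num_def poly_prod)

lemma poly_Q: "poly Q z = (\<Prod>j\<in>{1..d}. 1 - cnj (a j) * z)"
  by (simp add: blaschke_den_def poly_prod mult.commute)

lemma degree_P: "degree P = d"
proof -
  have "degree (\<Prod>j\<in>{1..d}. [:a j, -1:]) = (\<Sum>j\<in>{1..d}. degree [:a j, -1::complex:])"
    by (rule degree_prod_eq_sum_degree) auto
  then show ?thesis using norm_\<omega> by (auto simp: blaschke_num_def)
qed

lemma degree_Q_le: "degree Q \<le> d"
proof -
  have "degree Q \<le> (\<Sum>j\<in>{1..d}. degree [:1, - cnj (a j):])"
    unfolding blaschke_den_def using degree_prod_sum_le[of "{1..d}" "\<lambda>j. [:1, - cnj (a j):]"]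
    by (simp add: o_def)
  also have "\<dots> \<le> (\<Sum>j\<in>{1..d}. 1)" by (intro sum_mono) simp
  finally show ?thesis by simp
qed

text \<open>The zeros a j of P lie in the disc, the poles 1 / cnj (a j) outside it.\<close>
lemma no_common_root: "poly P z = 0 \<Longrightarrow> poly Q z \<noteq> 0"
proof
  assume "poly P z = 0" "poly Q z = 0"
  then obtain i j where i: "i \<in> {1..d}" "cnj (a i) * z = 1" and j: "j \<in> {1..d}" "a j = z"
    using norm_\<omega> by (auto simp: poly_P poly_Q)
  have norms: "norm (a i) < 1" "norm (a j) < 1" using norm_a i j by auto
  then have "norm (a i) * norm (a j) \<le> norm (a i) * 1" by (intro mult_left_mono) auto
  then have "norm (cnj (a i) * z) < 1" using norms j by (simp add: norm_mult)
  then show False using i by simp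
qed

sublocale rat_fun P Q d
  using degree_P degree_Q_le d_ge_2 no_common_root by unfold_locales auto

lemma conj_reflect_P: "conj_reflect d P = smult ((-1) ^ d * cnj \<omega>) Q"
proof (rule poly_eqI_nonzero)
  fix z :: complex
  assume z: "z \<noteq> 0"
  have "poly (conj_reflect d P) z = cnj \<omega> * (\<Prod>j\<in>{1..d}. z * (cnj (a j) - inverse z))"
    using z by (simp add: poly_conj_reflect degree_P poly_P prod.distrib complex_cnj_inverse)
  also have "\<dots> = cnj \<omega> * (\<Prod>j\<in>{1..d}. - (1 - cnj (a j) * z))"
    using z by (intro arg_cong[where f = "\<lambda>x. cnj \<omega> * x"] prod.cong) (auto simp: field_simps)
  also have "\<dots> = poly (smult ((-1) ^ d * cnj \<omega>) Q) z"
    by (subst prod_uminus) (simp add: poly_Q mult_ac)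
  finally show "poly (conj_reflect d P) z = poly (smult ((-1) ^ d * cnj \<omega>) Q) z" .
qed

lemma conj_reflect_Q: "conj_reflect d Q = smult ((-1) ^ d * cnj \<omega>) P"
proof (rule poly_eqI_nonzero)
  fix z :: complex
  assume z: "z \<noteq> 0"
  have "poly (conj_reflect d Q) z = (\<Prod>j\<in>{1..d}. z * (1 - a j * inverse z))"
    using z by (simp add: poly_conj_reflect degree_Q_le poly_Q prod.distrib complex_cnj_inverse)
  also have "\<dots> = (\<Prod>j\<in>{1..d}. - (a j - z))"
    using z by (intro prod.cong) (auto simp: field_simps)
  also have "\<dots> = (-1) ^ d * (cnj \<omega> * \<omega>) * (\<Prod>j\<in>{1..d}. a j - z)"
    by (subst prod_uminus) (simp add: cnj_\<omega>_mult_\<omega>)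
  finally show "poly (conj_reflect d Q) z = poly (smult ((-1) ^ d * cnj \<omega>) P) z"
    by (simp add: poly_P mult_ac)
qed

text \<open>Reflection maps the fibre over w onto the fibre over 1 / cnj w (with 1/0 = \<infinity>).\<close>
lemma conj_reflect_fiber_poly:
  "\<exists>w' \<kappa>. \<kappa> \<noteq> 0 \<and> conj_reflect d (fiber_poly w) = smult \<kappa> (fiber_poly w')"
proof -
  define \<epsilon> where "\<epsilon> = (-1) ^ d * cnj \<omega>"
  have \<epsilon>_nonzero: "\<epsilon> \<noteq> 0" using norm_\<omega> by (auto simp: \<epsilon>_def)
  show ?thesis
  proof (cases w)
    case None
    then have "conj_reflect d (fiber_poly w) = smult \<epsilon> (fiber_poly (Some 0))"
      by (simp add: fiber_poly_def conj_reflect_Q \<epsilon>_def)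
    then show ?thesis using \<epsilon>_nonzero by blast
  next
    case (Some c)
    then have reflect: "conj_reflect d (fiber_poly w) = smult \<epsilon> Q - smult (cnj c * \<epsilon>) P"
      by (simp add: fiber_poly_def conj_reflect_diff_smult degree_P degree_Q_le conj_reflect_P
          conj_reflect_Q \<epsilon>_def)
    show ?thesis
    proof (cases "c = 0")
      case True
      then have "conj_reflect d (fiber_poly w) = smult \<epsilon> (fiber_poly None)"
        using reflect by (simp add: fiber_poly_def)
      then show ?thesis using \<epsilon>_nonzero by blast
    next
      case False
      then have "conj_reflect d (fiber_poly w) = smult (- cnj c * \<epsilon>) (fiber_poly (Some (inverse (cnj c))))"
        using reflect by (simp add: fiber_poly_def smult_diff_right field_simps)
      then show ?thesis using False \<epsilon>_nonzero by (metis mult_eq_0_iff neg_equal_0_iff_equal complex_cnj_zero_iff)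
    qed
  qed
qed

lemma reflect_double_root:
  assumes "[:-z, 1:] ^ 2 dvd fiber_poly w"
  obtains w' T where "degree T \<le> d - 2" "fiber_poly w' = [:1, - cnj z:] ^ 2 * T"
proof -
  obtain T where T: "fiber_poly w = [:-z, 1:] ^ 2 * T" using assms by (metis dvdE)
  have "T \<noteq> 0" using T fiber_poly_nonzero by auto
  then have "2 + degree T \<le> d"
    using T degree_fiber_poly_le[of w] by (simp add: degree_mult_eq degree_power_eq)
  then have degree_T: "degree T \<le> d - 2" by simp
  obtain w' \<kappa> where \<kappa>: "\<kappa> \<noteq> 0" "conj_reflect d (fiber_poly w) = smult \<kappa> (fiber_poly w')"
    using conj_reflect_fiber_poly by blast
  have "2 + (d - 2) = d" using d_ge_2 by simp
  then have "conj_reflect d (fiber_poly w) = conj_reflect (2 + (d - 2)) ([:-z, 1:] ^ 2 * T)"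
    by (simp only: T)
  also have "\<dots> = conj_reflect 2 ([:-z, 1:] ^ 2) * conj_reflect (d - 2) T"
    using degree_T by (intro conj_reflect_mult) (simp_all add: degree_power_eq)
  also have "\<dots> = [:1, - cnj z:] ^ 2 * conj_reflect (d - 2) T"
    by (simp only: conj_reflect_linear_power2)
  finally have "fiber_poly w' = [:1, - cnj z:] ^ 2 * smult (inverse \<kappa>) (conj_reflect (d - 2) T)"
    using \<kappa> by (metis smult_smult left_inverse smult_1_left mult_smult_right)
  moreover have "degree (smult (inverse \<kappa>) (conj_reflect (d - 2) T)) \<le> d - 2"
    using degree_conj_reflect_le[OF degree_T] by simp
  ultimately show ?thesis using that by blast
qed

lemma outside_unit_disc_rat_map_Some:
  assumes "norm z \<ge> 1"
  shows "outside_unit_disc (rat_map P Q (Some z))"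
proof (cases "poly Q z = 0")
  case True
  then show ?thesis by (simp add: outside_unit_disc_def rat_map_Some)
next
  case False
  have "norm (poly Q z) = (\<Prod>j\<in>{1..d}. norm (1 - cnj (a j) * z))"
    by (simp add: poly_Q prod_norm)
  also have "\<dots> \<le> (\<Prod>j\<in>{1..d}. norm (a j - z))"
    using norm_a assms by (intro prod_mono) (auto intro: norm_one_minus_cnj_mult_le)
  also have "\<dots> = norm (poly P z)" by (simp add: poly_P norm_mult norm_\<omega> prod_norm)
  finally have "norm (poly P z / poly Q z) \<ge> 1"
    using False by (simp add: norm_divide le_divide_eq_1)
  then show ?thesis using False by (simp add: outside_unit_disc_def rat_map_Some)
qed

lemma outside_unit_disc_rat_map_None: "outside_unit_disc (rat_map P Q None)"
proof -
  have "lead_coeff P = \<omega> * (\<Prod>j\<in>{1..d}. lead_coeff [:a j, -1:])"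
    by (simp add: blaschke_num_def lead_coeff_prod)
  then have "norm (lead_coeff P) = 1" using norm_\<omega> by (simp add: norm_mult norm_power)
  moreover have "norm (lead_coeff Q) \<le> 1"
  proof -
    have "norm (lead_coeff Q) = (\<Prod>j\<in>{1..d}. norm (lead_coeff [:1, - cnj (a j):]))"
      by (simp add: blaschke_den_def lead_coeff_prod prod_norm)
    also have "\<dots> \<le> 1"
      using norm_a by (intro prod_le_1) (auto simp: less_imp_le)
    finally show ?thesis .
  qed
  moreover have "lead_coeff Q \<noteq> 0" using Q_nonzero by simp
  ultimately have "norm (lead_coeff P / lead_coeff Q) \<ge> 1"
    by (simp add: norm_divide)
  then show ?thesis
    by (cases "degree Q = d") (simp_all add: outside_unit_disc_def rat_map_None)
qed

theorem critical_value_outside_unit_disc: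
  "\<exists>w. outside_unit_disc w \<and> critical_value P Q w"
proof -
  obtain z where z: "poly (wronskian P Q) z = 0"
    using alg_closed_imp_poly_has_root degree_wronskian_pos d_ge_2 by blast
  define w where "w = rat_map P Q (Some z)"
  have double_root: "[:-z, 1:] ^ 2 dvd fiber_poly w"
    unfolding w_def using z by (rule double_root_at_wronskian_root)
  obtain w' T where T: "degree T \<le> d - 2" "fiber_poly w' = [:1, - cnj z:] ^ 2 * T"
    using reflect_double_root[OF double_root] .
  consider "norm z \<ge> 1" | "z \<noteq> 0" "norm z < 1" | "z = 0" by fastforce
  then show ?thesis
  proof cases
    case 1
    then show ?thesis
      using outside_unit_disc_rat_map_Some critical_value_if_double_root[OF double_root] w_def by blast
  next
    case 2
    define z' where "z' = inverse (cnj z)"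
    have double_root': "[:-z', 1:] ^ 2 dvd fiber_poly w'"
      unfolding T(2) z'_def using 2(1) by (rule reflected_linear_power2_dvd)
    then have "[:-z', 1:] dvd fiber_poly w'" by (metis dvd_mult_left power2_eq_square)
    then have "rat_map P Q (Some z') = w'" by (simp add: rat_map_Some_eq_iff poly_eq_0_iff_dvd)
    moreover have "norm z' \<ge> 1" using 2 by (simp add: z'_def norm_inverse one_le_inverse_iff)
    ultimately show ?thesis
      using outside_unit_disc_rat_map_Some critical_value_if_double_root[OF double_root'] by auto
  next
    case 3
    then have "degree (fiber_poly w') + 2 \<le> d" using T d_ge_2 by (simp add: one_pCons[symmetric])
    moreover from this have "rat_map P Q None = w'" by (simp add: rat_map_None_eq_iff)
    ultimately show ?thesis
      using critical_value_if_degree_fiber_poly_le outside_unit_disc_rat_map_None by auto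
  qed
qed

end

theorem proposition4p4:
  fixes \<omega> :: complex and a :: "nat \<Rightarrow> complex" and d :: nat
  assumes "norm \<omega> = 1"
    and "\<forall>j\<in>{1..d}. norm (a j) < 1"
    and "d \<ge> 2"
  shows "\<exists>w. (w = None \<or> (\<exists>c. w = Some c \<and> norm c \<ge> 1)) \<and>
             critical_value (blaschke_num \<omega> a d) (blaschke_den a d) w"
proof -
  interpret blaschke \<omega> a d using assms by unfold_locales
  show ?thesis using critical_value_outside_unit_disc unfolding outside_unit_disc_def .
qed

end
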